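(* For all $i,j\in\{0,\dots,r-1\}$, as $\epsilon\to0$, uniformly for $A\in W_i$, $B\in W_j$ of norm at most $1$, \[ H_{ij}(\epsilon)(A,B)=\begin{cases}O(\epsilon^{i+j+1})&\text{if }i+j\text{ is odd},\\ (-1)^{(i-j)/2}\,b_{1+(i+j)/2}\,\epsilon^{i+j}\langle AS^ie,BS^je\rangle+O(\epsilon^{i+j+2})&\text{if }i+j\text{ is even}.\end{cases} \]
   Context: $\mathfrak g=\mathfrak g_1\oplus\mathfrak g_2$ is the Lie algebra of a $2$-step stratified group ($[\mathfrak g_1,\mathfrak g_1]=\mathfrak g_2\ne\{0\}$, $[\mathfrak g,\mathfrak g_2]=0$), and $\langle\cdot,\cdot\rangle$ is an inner product on $\mathfrak g_1$. For $\mu\in\mathfrak g_2^*$, $J_\mu$ is the skew-symmetric endomorphism of $\mathfrak g_1$ with $\langle J_\mu x,x'\rangle=\mu([x,x'])$; $V=\{J_\mu:\mu\in\mathfrak g_2^*\}$, and $V_{\mathrm{gen}}$ is the set of elements of $V$ with the maximal number of distinct eigenvalues among elements of $V$. Fix $S\in V_{\mathrm{gen}}$ and $e\in\mathfrak g_1$ whose orthogonal projection onto each eigenspace of $S^2$ is nonzero. For $j\in\mathbb N$ let $V_j=\{T\in V: TS^le=0\text{ for }l=0,\dots,j-1\}$ (so $V_0=V$), let $r$ be the minimal natural number with $V_r=\{0\}$ (it exists), and for $j=0,\dots,r-1$ let $W_j$ be a linear complement of $V_{j+1}$ in $V_j$. For $k\ge1$ let $b_k=2\pi^{-2k}\zeta(2k)$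 ($\zeta$ the Riemann zeta function), so that $z/\tan z=1-\sum_{k>0}b_kz^{2k}$. Define $\Phi_{00}(T)=\sum_{k>0}b_k|T^ke|^2$ for $T\in V$ of small norm, $H(\epsilon)=\tfrac12\nabla^2\Phi_{00}(\epsilon S)$ (a symmetric bilinear form on $V$, for small $\epsilon\in\mathbb R$), and let $H_{ij}(\epsilon)$ be the restriction of $H(\epsilon)$ to $W_i\times W_j$. *)

theory Defs
  imports "HOL-Analysis.Analysis"
begin

text \<open>The first layer g1 is a Euclidean space 'a, the second layer g2 is 'b,
  the bracket g1 x g1 -> g2 is br. Endomorphisms of g1 are bounded linear maps.\<close>

definition Vset :: "('a::euclidean_space \<Rightarrow> 'a \<Rightarrow> 'b::euclidean_space) \<Rightarrow> ('a \<Rightarrow>\<^sub>L 'a) set" where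
  "Vset br = {T. \<exists>\<mu>::'b \<Rightarrow> real. linear \<mu> \<and>
       (\<forall>x x'. inner (blinfun_apply T x) x' = \<mu> (br x x'))}"

text \<open>Complex eigenvalues of a real endomorphism (eigenvalues of its complexification):
  lambda is an eigenvalue iff T(u + i v) = lambda (u + i v) for some u + i v nonzero.\<close>
definition ceig :: "('a::euclidean_space \<Rightarrow>\<^sub>L 'a) \<Rightarrow> complex set" where
  "ceig T = {z. \<exists>u v. (u \<noteq> 0 \<or> v \<noteq> 0) \<and>
       blinfun_apply T u = Re z *\<^sub>R u - Im z *\<^sub>R v \<and>
       blinfun_apply T v = Im z *\<^sub>R u + Re z *\<^sub>R v}"

definition Vgen :: "('a::euclidean_space \<Rightarrow> 'a \<Rightarrow> 'b::euclidean_space) \<Rightarrow> ('a \<Rightarrow>\<^sub>L 'a) set" where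
  "Vgen br = {T \<in> Vset br. \<forall>T' \<in> Vset br. card (ceig T') \<le> card (ceig T)}"

definition Vj :: "('a::euclidean_space \<Rightarrow> 'a \<Rightarrow> 'b::euclidean_space) \<Rightarrow> ('a \<Rightarrow>\<^sub>L 'a) \<Rightarrow> 'a \<Rightarrow> nat \<Rightarrow> ('a \<Rightarrow>\<^sub>L 'a) set" where
  "Vj br S e j = {T \<in> Vset br. \<forall>l<j. blinfun_apply T ((blinfun_apply S ^^ l) e) = 0}"

definition zeta_nat :: "nat \<Rightarrow> real" where
  "zeta_nat s = (\<Sum>n. 1 / (real (Suc n)) ^ s)"

definition bcoef :: "nat \<Rightarrow> real" where
  "bcoef k = 2 * pi powr (- 2 * real k) * zeta_nat (2 * k)"

definition Phi00 :: "'a::euclidean_space \<Rightarrow> ('a \<Rightarrow>\<^sub>L 'a) \<Rightarrow> real" where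
  "Phi00 e T = (\<Sum>k. bcoef (Suc k) * (norm ((blinfun_apply T ^^ Suc k) e))^2)"

text \<open>H(eps) = 1/2 Hessian of Phi00 at eps S, evaluated on (A,B):
  the mixed second directional derivative.\<close>
definition Hform :: "'a::euclidean_space \<Rightarrow> ('a \<Rightarrow>\<^sub>L 'a) \<Rightarrow> real \<Rightarrow> ('a \<Rightarrow>\<^sub>L 'a) \<Rightarrow> ('a \<Rightarrow>\<^sub>L 'a) \<Rightarrow> real" where
  "Hform e S \<epsilon> A B = 1/2 * deriv (\<lambda>s. deriv (\<lambda>t. Phi00 e (\<epsilon> *\<^sub>R S + s *\<^sub>R A + t *\<^sub>R B)) 0) 0"

end

theory Submission
  imports Defs
begin

text \<open>
  Since Phi00(T) = sum_k b(k+1) |T^(k+1) e|^2, differentiating termwise gives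
  H(eps)(A,B) = sum_k b(k+1) eps^(2k) c(k+1), where c(m) is half the mixed second derivative of
  |(S + sA + tB)^m e|^2 at s = t = 0; the bound b(k) k^2 <= 6 (4/9)^k justifies this as long as
  |eps| |S| <= 1/4. As S, A, B are skew, c(m) is a signed sum of the numbers
  <A S^y e, S^z B S^w e> with y + z + w = 2m - 2, and for A in V_i, B in V_j such a number vanishes
  unless y >= i and w >= j. Hence c(m) = 0 for 2m < i + j + 2, only <A S^i e, B S^j e> survives
  at 2m = i + j + 2, and the terms with larger m form a tail of order eps^(i+j+1) resp. eps^(i+j+2).
\<close>

section \<open>Derivatives of powers along a line\<close>

primrec funpow_deriv :: "('a::real_vector \<Rightarrow> 'a) \<Rightarrow> ('a \<Rightarrow> 'a) \<Rightarrow> 'a \<Rightarrow> nat \<Rightarrow> 'a" where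
  "funpow_deriv M D e 0 = 0"
| "funpow_deriv M D e (Suc k) = D ((M^^k) e) + M (funpow_deriv M D e k)"

primrec funpow_deriv2 :: "('a::real_vector \<Rightarrow> 'a) \<Rightarrow> ('a \<Rightarrow> 'a) \<Rightarrow> ('a \<Rightarrow> 'a) \<Rightarrow> 'a \<Rightarrow> nat \<Rightarrow> 'a" where
  "funpow_deriv2 M A B e 0 = 0"
| "funpow_deriv2 M A B e (Suc k) =
     B (funpow_deriv M A e k) + A (funpow_deriv M B e k) + M (funpow_deriv2 M A B e k)"

text \<open>Half the mixed second derivative of |(M + sA + tB)^m e|^2 at s = t = 0.\<close>

definition hess_coeff :: "('a::real_inner \<Rightarrow> 'a) \<Rightarrow> ('a \<Rightarrow> 'a) \<Rightarrow> ('a \<Rightarrow> 'a) \<Rightarrow> 'a \<Rightarrow> nat \<Rightarrow> real" where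
  "hess_coeff M A B e m =
     inner (funpow_deriv2 M A B e m) ((M^^m) e) + inner (funpow_deriv M B e m) (funpow_deriv M A e m)"

lemma has_vector_derivative_funpow_line:
  fixes N D :: "'a::real_normed_vector \<Rightarrow> 'a"
  assumes N: "bounded_linear N" and D: "bounded_linear D"
  shows "((\<lambda>t. ((\<lambda>x. N x + t *\<^sub>R D x)^^k) e)
           has_vector_derivative funpow_deriv (\<lambda>x. N x + t *\<^sub>R D x) D e k) (at t)"
proof (induction k)
  case 0 then show ?case by simp
next
  case (Suc k)
  let ?v = "\<lambda>t. ((\<lambda>x. N x + t *\<^sub>R D x)^^k) e" and ?v' = "funpow_deriv (\<lambda>x. N x + t *\<^sub>R D x) D e k"
  have "((\<lambda>t. N (?v t) + t *\<^sub>R D (?v t)) has_vector_derivative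
          N ?v' + (t *\<^sub>R D ?v' + 1 *\<^sub>R D (?v t))) (at t)"
    by (intro has_vector_derivative_add has_vector_derivative_scaleR DERIV_ident
        bounded_linear.has_vector_derivative[OF N Suc] bounded_linear.has_vector_derivative[OF D Suc])
  then show ?case by (simp add: algebra_simps)
qed

lemma has_vector_derivative_funpow_deriv_line:
  fixes N A B :: "'a::real_normed_vector \<Rightarrow> 'a"
  assumes N: "bounded_linear N" and A: "bounded_linear A" and B: "bounded_linear B"
  shows "((\<lambda>s. funpow_deriv (\<lambda>x. N x + s *\<^sub>R A x) B e k)
           has_vector_derivative funpow_deriv2 (\<lambda>x. N x + s *\<^sub>R A x) A B e k) (at s)"
proof (induction k)
  case 0 then show ?case by simp
next
  case (Suc k)
  let ?u = "\<lambda>s. ((\<lambda>x. N x + s *\<^sub>R A x)^^k) e" and ?w = "\<lambda>s. funpow_deriv (\<lambda>x. N x + s *\<^sub>R A x) B e k"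
  let ?u' = "funpow_deriv (\<lambda>x. N x + s *\<^sub>R A x) A e k"
    and ?w' = "funpow_deriv2 (\<lambda>x. N x + s *\<^sub>R A x) A B e k"
  have u: "(?u has_vector_derivative ?u') (at s)" by (rule has_vector_derivative_funpow_line[OF N A])
  have "((\<lambda>s. B (?u s) + (N (?w s) + s *\<^sub>R A (?w s))) has_vector_derivative
          B ?u' + (N ?w' + (s *\<^sub>R A ?w' + 1 *\<^sub>R A (?w s)))) (at s)"
    by (intro has_vector_derivative_add has_vector_derivative_scaleR DERIV_ident
        bounded_linear.has_vector_derivative[OF B u] bounded_linear.has_vector_derivative[OF N Suc]
        bounded_linear.has_vector_derivative[OF A Suc])
  then show ?case by (simp add: algebra_simps)
qed

lemma norm_funpow_le:
  fixes M :: "'a::real_normed_vector \<Rightarrow> 'a"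
  assumes "\<And>x. norm (M x) \<le> R * norm x" "R \<ge> 0"
  shows "norm ((M^^k) e) \<le> R^k * norm e"
proof (induction k)
  case 0 then show ?case by simp
next
  case (Suc k)
  have "norm ((M^^Suc k) e) \<le> R * norm ((M^^k) e)" using assms(1) by simp
  also have "\<dots> \<le> R * (R^k * norm e)" using Suc assms(2) by (rule mult_left_mono)
  finally show ?case by simp
qed

lemma norm_funpow_deriv_le:
  fixes M D :: "'a::real_normed_vector \<Rightarrow> 'a"
  assumes M: "\<And>x. norm (M x) \<le> R * norm x" and D: "\<And>x. norm (D x) \<le> R * norm x" and R: "R \<ge> 0"
  shows "norm (funpow_deriv M D e k) \<le> real k * R^k * norm e"
proof (induction k)
  case 0 then show ?case by simp
next
  case (Suc k)
  have "norm (funpow_deriv M D e (Suc k)) \<le> norm (D ((M^^k) e)) + norm (M (funpow_deriv M D e k))"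
    by (simp add: norm_triangle_ineq)
  also have "\<dots> \<le> R * (R^k * norm e) + R * (real k * R^k * norm e)"
  proof (rule add_mono)
    show "norm (D ((M^^k) e)) \<le> R * (R^k * norm e)"
      using D[of "(M^^k) e"] norm_funpow_le[OF M R, of k e] R by (meson mult_left_mono order_trans)
    show "norm (M (funpow_deriv M D e k)) \<le> R * (real k * R^k * norm e)"
      using M[of "funpow_deriv M D e k"] Suc R by (meson mult_left_mono order_trans)
  qed
  also have "\<dots> = real (Suc k) * R^Suc k * norm e" by (simp add: algebra_simps)
  finally show ?case .
qed

lemma norm_funpow_deriv2_le:
  fixes M A B :: "'a::real_normed_vector \<Rightarrow> 'a"
  assumes M: "\<And>x. norm (M x) \<le> R * norm x" and A: "\<And>x. norm (A x) \<le> R * norm x"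
    and B: "\<And>x. norm (B x) \<le> R * norm x" and R: "R \<ge> 0"
  shows "norm (funpow_deriv2 M A B e k) \<le> real k ^ 2 * R^k * norm e"
proof (induction k)
  case 0 then show ?case by simp
next
  case (Suc k)
  have "norm (funpow_deriv2 M A B e (Suc k)) \<le> norm (B (funpow_deriv M A e k))
      + norm (A (funpow_deriv M B e k)) + norm (M (funpow_deriv2 M A B e k))"
    by (simp add: norm_triangle_le norm_triangle_ineq add_mono)
  also have "\<dots> \<le> R * (real k * R^k * norm e) + R * (real k * R^k * norm e) + R * (real k ^ 2 * R^k * norm e)"
  proof (intro add_mono)
    show "norm (B (funpow_deriv M A e k)) \<le> R * (real k * R^k * norm e)"
      using B[of "funpow_deriv M A e k"] norm_funpow_deriv_le[OF M A R, of e k] R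
      by (meson mult_left_mono order_trans)
    show "norm (A (funpow_deriv M B e k)) \<le> R * (real k * R^k * norm e)"
      using A[of "funpow_deriv M B e k"] norm_funpow_deriv_le[OF M B R, of e k] R
      by (meson mult_left_mono order_trans)
    show "norm (M (funpow_deriv2 M A B e k)) \<le> R * (real k ^ 2 * R^k * norm e)"
      using M[of "funpow_deriv2 M A B e k"] Suc R by (meson mult_left_mono order_trans)
  qed
  also have "\<dots> = (2 * real k + real k ^ 2) * (R^Suc k * norm e)"
    by (simp add: algebra_simps power2_eq_square)
  also have "\<dots> \<le> real (Suc k) ^ 2 * (R^Suc k * norm e)"
    by (rule mult_right_mono) (auto simp: power2_eq_square algebra_simps R)
  finally show ?case by (simp add: mult.assoc)
qed

lemma abs_hess_coeff_le:
  fixes M A B :: "'a::real_inner \<Rightarrow> 'a"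
  assumes M: "\<And>x. norm (M x) \<le> R * norm x" and A: "\<And>x. norm (A x) \<le> R * norm x"
    and B: "\<And>x. norm (B x) \<le> R * norm x" and R: "R \<ge> 0"
  shows "\<bar>hess_coeff M A B e m\<bar> \<le> real m^2 * (2 * R^(2*m) * (norm e)^2)"
proof -
  have "\<bar>hess_coeff M A B e m\<bar> \<le> norm (funpow_deriv2 M A B e m) * norm ((M^^m) e)
      + norm (funpow_deriv M B e m) * norm (funpow_deriv M A e m)"
    unfolding hess_coeff_def
    by (rule order_trans[OF abs_triangle_ineq add_mono[OF Cauchy_Schwarz_ineq2 Cauchy_Schwarz_ineq2]])
  also have "\<dots> \<le> (real m^2 * R^m * norm e) * (R^m * norm e) + (real m * R^m * norm e) * (real m * R^m * norm e)"
    using norm_funpow_deriv2_le[OF M A B R] norm_funpow_le[OF M R]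
      norm_funpow_deriv_le[OF M B R] norm_funpow_deriv_le[OF M A R] R
    by (intro add_mono mult_mono) auto
  also have "\<dots> = real m^2 * (2 * R^(2*m) * (norm e)^2)"
    unfolding mult_2 power_add power2_eq_square by (simp only: mult_ac distrib_left distrib_right)
  finally show ?thesis .
qed

lemma funpow_scaleR:
  fixes S :: "'a::real_vector \<Rightarrow> 'a"
  assumes "linear S"
  shows "((\<lambda>x. \<epsilon> *\<^sub>R S x)^^m) e = \<epsilon>^m *\<^sub>R (S^^m) e"
  by (induction m) (simp_all add: linear_scale[OF assms])

lemma funpow_deriv_scaleR:
  fixes S D :: "'a::real_vector \<Rightarrow> 'a"
  assumes S: "linear S" and D: "linear D"
  shows "funpow_deriv (\<lambda>x. \<epsilon> *\<^sub>R S x) D e m = \<epsilon>^(m - 1) *\<^sub>R funpow_deriv S D e m"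
proof (induction m)
  case 0 then show ?case by simp
next
  case (Suc m)
  have "\<epsilon> *\<^sub>R S (\<epsilon>^(m - 1) *\<^sub>R funpow_deriv S D e m) = \<epsilon>^m *\<^sub>R S (funpow_deriv S D e m)"
    by (cases m) (simp_all add: linear_0[OF S] linear_scale[OF S])
  then show ?case
    using Suc by (simp add: funpow_scaleR[OF S] linear_scale[OF D] scaleR_add_right)
qed

lemma funpow_deriv2_scaleR:
  fixes S A B :: "'a::real_vector \<Rightarrow> 'a"
  assumes S: "linear S" and A: "linear A" and B: "linear B"
  shows "funpow_deriv2 (\<lambda>x. \<epsilon> *\<^sub>R S x) A B e m = \<epsilon>^(m - 2) *\<^sub>R funpow_deriv2 S A B e m"
proof (induction m)
  case 0 then show ?case by simp
next
  case (Suc m)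
  have "\<epsilon> *\<^sub>R S (\<epsilon>^(m - 2) *\<^sub>R funpow_deriv2 S A B e m) = \<epsilon>^(m - 1) *\<^sub>R S (funpow_deriv2 S A B e m)"
  proof (cases "m \<ge> 2")
    case True
    then obtain d where "m = Suc (Suc d)" by (metis add_2_eq_Suc le_Suc_ex)
    then show ?thesis by (simp add: linear_scale[OF S])
  next
    case False
    then consider "m = 0" | "m = Suc 0" by arith
    then have "funpow_deriv2 S A B e m = 0"
      by cases (simp_all add: linear_0[OF A] linear_0[OF B] linear_0[OF S])
    then show ?thesis by (simp add: linear_0[OF S])
  qed
  then show ?case
    using Suc by (simp add: funpow_deriv_scaleR[OF S A] funpow_deriv_scaleR[OF S B] linear_scale[OF A] linear_scale[OF B] scaleR_add_right)
qed

lemma hess_coeff_scaleR: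
  fixes S A B :: "'a::real_inner \<Rightarrow> 'a"
  assumes S: "linear S" and A: "linear A" and B: "linear B"
  shows "hess_coeff (\<lambda>x. \<epsilon> *\<^sub>R S x) A B e (Suc k) = \<epsilon>^(2*k) * hess_coeff S A B e (Suc k)"
proof -
  let ?X = "inner (funpow_deriv2 S A B e (Suc k)) ((S^^Suc k) e)"
  have first: "\<epsilon>^(Suc k) * (\<epsilon>^(Suc k - 2) * ?X) = \<epsilon>^(2*k) * ?X"
  proof (cases k)
    case 0
    then have "funpow_deriv2 S A B e (Suc k) = 0" by (simp add: linear_0[OF A] linear_0[OF B] linear_0[OF S])
    then show ?thesis by simp
  next
    case (Suc k')
    then have "Suc k + (Suc k - 2) = 2*k" by simp
    then show ?thesis by (simp only: mult.assoc[symmetric] power_add[symmetric])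
  qed
  have "Suc k - 1 + (Suc k - 1) = 2*k" by simp
  then have second: "\<epsilon>^(Suc k - 1) * (\<epsilon>^(Suc k - 1) * y) = \<epsilon>^(2*k) * y" for y :: real
    by (simp only: mult.assoc[symmetric] power_add[symmetric])
  show ?thesis
    unfolding hess_coeff_def funpow_scaleR[OF S] funpow_deriv_scaleR[OF S A] funpow_deriv_scaleR[OF S B]
      funpow_deriv2_scaleR[OF S A B] inner_scaleR_left inner_scaleR_right first second
    by (simp only: distrib_left)
qed

section \<open>The Hessian coefficients at a skew-symmetric point\<close>

lemma linear_recurrence_eq_sum:
  fixes S :: "'a::real_vector \<Rightarrow> 'a"
  assumes "linear S" "X 0 = 0" "\<And>k. X (Suc k) = Y k + S (X k)"
  shows "X m = (\<Sum>q<m. (S^^(m - Suc q)) (Y q))"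
proof (induction m)
  case 0 then show ?case using assms by simp
next
  case (Suc m)
  have "X (Suc m) = Y m + S (\<Sum>q<m. (S^^(m - Suc q)) (Y q))" using Suc assms(3) by simp
  also have "S (\<Sum>q<m. (S^^(m - Suc q)) (Y q)) = (\<Sum>q<m. (S^^(Suc m - Suc q)) (Y q))"
    by (simp add: linear_sum[OF assms(1)] Suc_diff_Suc[symmetric])
  finally show ?case by (simp add: add.commute)
qed

lemma funpow_deriv_eq_sum:
  "linear S \<Longrightarrow> funpow_deriv S D e m = (\<Sum>q<m. (S^^(m - Suc q)) (D ((S^^q) e)))"
  by (rule linear_recurrence_eq_sum) auto

lemma funpow_deriv2_eq_sum:
  "linear S \<Longrightarrow> funpow_deriv2 S A B e m =
     (\<Sum>q<m. (S^^(m - Suc q)) (B (funpow_deriv S A e q) + A (funpow_deriv S B e q)))"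
  by (rule linear_recurrence_eq_sum) auto

lemma funpow_apply_add: "(S^^a) ((S^^b) x) = (S^^(a + b)) x"
  by (simp add: funpow_add)

lemma funpow_linear_0:
  fixes S :: "'a::real_vector \<Rightarrow> 'a"
  assumes "linear S"
  shows "(S^^n) 0 = 0"
  by (induction n) (simp_all add: linear_0[OF assms])

lemma inner_skew_funpow:
  fixes S :: "'a::real_inner \<Rightarrow> 'a"
  assumes "\<And>x y. inner (S x) y = - inner x (S y)"
  shows "inner ((S^^a) x) y = (-1)^a * inner x ((S^^a) y)"
proof (induction a arbitrary: y)
  case 0 then show ?case by simp
next
  case (Suc a)
  have "inner ((S^^Suc a) x) y = - inner ((S^^a) x) (S y)" using assms by simp
  also have "\<dots> = (-1)^Suc a * inner x ((S^^Suc a) y)"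
    using Suc by (simp only: funpow_Suc_right comp_apply) simp
  finally show ?case .
qed

lemma inner_skew_funpow':
  fixes S :: "'a::real_inner \<Rightarrow> 'a"
  assumes "\<And>x y. inner (S x) y = - inner x (S y)"
  shows "inner x ((S^^a) y) = (-1)^a * inner ((S^^a) x) y"
  using inner_skew_funpow[OF assms, of a x y] by (simp add: power_mult_distrib[symmetric])

lemma power_int_minus_one_minus_int: "(-1::real) powi (- int n) = (-1)^n"
  by (cases "even n") (simp_all add: power_int_minus)

lemma sum_eq_delta:
  assumes "finite A" "\<And>x. x \<in> A \<Longrightarrow> f x = (if x = a then c else 0)"
  shows "sum f A = (if a \<in> A then c else (0::'b::comm_monoid_add))"
  using assms by (simp add: sum.delta cong: sum.cong)

definition mixed_term :: "('a::real_inner \<Rightarrow> 'a) \<Rightarrow> ('a \<Rightarrow> 'a) \<Rightarrow> ('a \<Rightarrow> 'a) \<Rightarrow> 'a \<Rightarrow> nat \<Rightarrow> nat \<Rightarrow> nat \<Rightarrow> real"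
  where "mixed_term S A B e y z w = inner (A ((S^^y) e)) ((S^^z) (B ((S^^w) e)))"

context
  fixes S A B :: "'a::real_inner \<Rightarrow> 'a" and e :: 'a
  assumes linS: "linear S"
    and skS: "\<And>x y. inner (S x) y = - inner x (S y)"
    and skA: "\<And>x y. inner (A x) y = - inner x (A y)"
    and skB: "\<And>x y. inner (B x) y = - inner x (B y)"
begin

lemma inner_B_funpow_deriv:
  "inner (B (funpow_deriv S A e q)) y =
     - (\<Sum>c<q. (-1)^(q - Suc c) * inner (A ((S^^c) e)) ((S^^(q - Suc c)) (B y)))"
proof -
  have "inner (B (funpow_deriv S A e q)) y = - inner (funpow_deriv S A e q) (B y)" by (rule skB)
  also have "inner (funpow_deriv S A e q) (B y) = (\<Sum>c<q. inner ((S^^(q - Suc c)) (A ((S^^c) e))) (B y))"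
    by (simp add: funpow_deriv_eq_sum[OF linS] inner_sum_left)
  finally show ?thesis by (simp add: inner_skew_funpow[OF skS])
qed

lemma inner_A_funpow_deriv:
  "inner (A (funpow_deriv S B e q)) ((S^^n) e) = - (\<Sum>w<q. mixed_term S A B e n (q - Suc w) w)"
proof -
  have "inner (A (funpow_deriv S B e q)) ((S^^n) e) = - inner (funpow_deriv S B e q) (A ((S^^n) e))"
    by (rule skA)
  also have "inner (funpow_deriv S B e q) (A ((S^^n) e)) = (\<Sum>w<q. mixed_term S A B e n (q - Suc w) w)"
    by (simp add: funpow_deriv_eq_sum[OF linS] inner_sum_left inner_sum_right mixed_term_def inner_commute)
  finally show ?thesis .
qed

lemma hess_coeff_eq_sums: "hess_coeff S A B e m =
   - (\<Sum>q<m. (-1)^(m - Suc q) * (\<Sum>c<q. (-1)^(q - Suc c) * mixed_term S A B e c (q - Suc c) (m - Suc q + m)))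
   - (\<Sum>q<m. (-1)^(m - Suc q) * (\<Sum>w<q. mixed_term S A B e (m - Suc q + m) (q - Suc w) w))
   + (\<Sum>c<m. \<Sum>w<m. (-1)^(m - Suc c) * mixed_term S A B e c (m - Suc c + (m - Suc w)) w)"
proof -
  have first: "inner (funpow_deriv2 S A B e m) ((S^^m) e) =
     (\<Sum>q<m. (-1)^(m - Suc q) * (inner (B (funpow_deriv S A e q)) ((S^^(m - Suc q + m)) e)
        + inner (A (funpow_deriv S B e q)) ((S^^(m - Suc q + m)) e)))"
    by (simp add: funpow_deriv2_eq_sum[OF linS] inner_sum_left inner_skew_funpow[OF skS] funpow_apply_add
        inner_add_left)
  have second: "inner (funpow_deriv S B e m) (funpow_deriv S A e m) =
     (\<Sum>c<m. \<Sum>w<m. (-1)^(m - Suc c) * mixed_term S A B e c (m - Suc c + (m - Suc w)) w)"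
  proof -
    have "inner ((S^^a) (B ((S^^w) e))) ((S^^b) (A ((S^^c) e))) = (-1)^b * mixed_term S A B e c (b + a) w"
      for a b c w
      unfolding inner_skew_funpow'[OF skS, of _ b] mixed_term_def
      by (simp add: inner_commute funpow_apply_add)
    then show ?thesis by (simp add: funpow_deriv_eq_sum[OF linS] inner_sum_left inner_sum_right)
  qed
  show ?thesis
    unfolding hess_coeff_def first second inner_B_funpow_deriv inner_A_funpow_deriv
    by (simp add: algebra_simps sum.distrib sum_subtractf sum_negf sum_distrib_left mixed_term_def)
qed

context
  fixes i j :: nat
  assumes vanA: "\<And>l. l < i \<Longrightarrow> A ((S^^l) e) = 0"
    and vanB: "\<And>l. l < j \<Longrightarrow> B ((S^^l) e) = 0"
begin

lemma mixed_term_eq_0: "y + z + w < i + j \<Longrightarrow> mixed_term S A B e y z w = 0"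
  by (cases "y < i") (auto simp: mixed_term_def vanA vanB funpow_linear_0[OF linS])

lemma mixed_term_critical:
  assumes "y + z + w = i + j"
  shows "mixed_term S A B e y z w = (if y = i \<and> z = 0 \<and> w = j then mixed_term S A B e i 0 j else 0)"
proof (cases "y < i \<or> w < j")
  case True then show ?thesis by (auto simp: mixed_term_def vanA vanB funpow_linear_0[OF linS])
next
  case False
  with assms have "y = i \<and> z = 0 \<and> w = j" by arith
  then show ?thesis by simp
qed

lemma hess_coeff_eq_0:
  assumes "2*m < i + j + 2"
  shows "hess_coeff S A B e m = 0"
  unfolding hess_coeff_eq_sums using assms by (simp add: mixed_term_eq_0)

lemma hess_coeff_critical_expand:
  assumes m: "2*m = i + j + 2"
  defines "P \<equiv> mixed_term S A B e i 0 j"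
  shows "hess_coeff S A B e m = - (if Suc i < m then (-1)^(m - Suc (Suc i)) * P else 0)
      - (if Suc j < m then (-1)^(m - Suc (Suc j)) * P else 0) + (if i = j then P else 0)"
proof -
  have crit: "mixed_term S A B e y z w = (if y = i \<and> z = 0 \<and> w = j then P else 0)"
    if "y + z + w = i + j" for y z w
    using mixed_term_critical[OF that] unfolding P_def .
  have first: "(\<Sum>q<m. (-1)^(m - Suc q) * (\<Sum>c<q. (-1)^(q - Suc c) * mixed_term S A B e c (q - Suc c) (m - Suc q + m)))
      = (if Suc i \<in> {..<m} then (-1)^(m - Suc (Suc i)) * P else 0)"
  proof (rule sum_eq_delta)
    fix q assume "q \<in> {..<m}"
    then have "(\<Sum>c<q. (-1)^(q - Suc c) * mixed_term S A B e c (q - Suc c) (m - Suc q + m))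
        = (if i \<in> {..<q} then (if q = Suc i then P else 0) else 0)"
      using m by (intro sum_eq_delta) (auto simp: crit)
    then show "(-1)^(m - Suc q) * (\<Sum>c<q. (-1)^(q - Suc c) * mixed_term S A B e c (q - Suc c) (m - Suc q + m))
        = (if q = Suc i then (-1)^(m - Suc (Suc i)) * P else 0)"
      by auto
  qed simp
  have second: "(\<Sum>q<m. (-1)^(m - Suc q) * (\<Sum>w<q. mixed_term S A B e (m - Suc q + m) (q - Suc w) w))
      = (if Suc j \<in> {..<m} then (-1)^(m - Suc (Suc j)) * P else 0)"
  proof (rule sum_eq_delta)
    fix q assume "q \<in> {..<m}"
    then have "(\<Sum>w<q. mixed_term S A B e (m - Suc q + m) (q - Suc w) w)
        = (if j \<in> {..<q} then (if q = Suc j then P else 0) else 0)"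
      using m by (intro sum_eq_delta) (auto simp: crit)
    then show "(-1)^(m - Suc q) * (\<Sum>w<q. mixed_term S A B e (m - Suc q + m) (q - Suc w) w)
        = (if q = Suc j then (-1)^(m - Suc (Suc j)) * P else 0)"
      by auto
  qed simp
  have "(\<Sum>w<m. (-1)^(m - Suc c) * mixed_term S A B e c (m - Suc c + (m - Suc w)) w)
      = (if c = i then (if i = j then P else 0) else 0)" if "c < m" for c
  proof -
    have "(\<Sum>w<m. (-1)^(m - Suc c) * mixed_term S A B e c (m - Suc c + (m - Suc w)) w)
        = (if j \<in> {..<m} then (if c = i \<and> i = j then P else 0) else 0)"
      using that m by (intro sum_eq_delta) (auto simp: crit)
    then show ?thesis using that by auto
  qed
  then have third: "(\<Sum>c<m. \<Sum>w<m. (-1)^(m - Suc c) * mixed_term S A B e c (m - Suc c + (m - Suc w)) w)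
      = (if i \<in> {..<m} then (if i = j then P else 0) else 0)"
    by (intro sum_eq_delta) auto
  have "i = j \<Longrightarrow> i < m" using m by simp
  then show ?thesis unfolding hess_coeff_eq_sums first second third by auto
qed

lemma hess_coeff_critical:
  assumes m: "2*m = i + j + 2"
  shows "hess_coeff S A B e m = (-1) powi ((int i - int j) div 2) * mixed_term S A B e i 0 j"
proof -
  consider (lt) d where "m = i + d + 2" "j = i + 2*d + 2" | (eq) "i = j" "m = Suc i"
    | (gt) d where "m = j + d + 2" "i = j + 2*d + 2"
  proof -
    consider "i < j" | "i = j" | "j < i" by arith
    then show thesis
      using m that(1)[of "m - i - 2"] that(2) that(3)[of "m - j - 2"] by cases arith+
  qed
  then show ?thesis
  proof cases
    case (lt d)
    then have "(int i - int j) div 2 = - int (Suc d)" by simp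
    then have "(-1::real) powi ((int i - int j) div 2) = (-1)^Suc d"
      by (simp only: power_int_minus_one_minus_int)
    then show ?thesis unfolding hess_coeff_critical_expand[OF m] using lt by simp
  next
    case eq
    then show ?thesis unfolding hess_coeff_critical_expand[OF m] by simp
  next
    case (gt d)
    then have "(-1::real) powi ((int i - int j) div 2) = (-1)^Suc d"
      by (simp flip: power_int_of_nat)
    then show ?thesis unfolding hess_coeff_critical_expand[OF m] using gt by simp
  qed
qed

lemma hess_coeff_middle:
  "hess_coeff S A B e (Suc ((i + j) div 2)) =
     (if odd (i + j) then 0 else (-1) powi ((int i - int j) div 2) * mixed_term S A B e i 0 j)"
proof (cases "odd (i + j)")
  case True
  then have "2 * Suc ((i + j) div 2) < i + j + 2" by presburger
  then show ?thesis using True hess_coeff_eq_0 by simp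
next
  case False
  then have "2 * Suc ((i + j) div 2) = i + j + 2" by presburger
  then show ?thesis using False hess_coeff_critical by simp
qed

end

end

section \<open>The coefficients of the series\<close>

lemma zeta_nat_even_bounds:
  assumes "k \<ge> 1"
  shows "0 \<le> zeta_nat (2*k)" "zeta_nat (2*k) \<le> 3"
proof -
  have sq: "(\<lambda>n. 1 / (real (Suc n))^2) sums (pi^2/6)" using inverse_squares_sums by simp
  have le: "1 / (real (Suc n))^(2*k) \<le> 1 / (real (Suc n))^2" for n
    by (rule divide_left_mono) (use assms in \<open>auto intro: power_increasing\<close>)
  have sm: "summable (\<lambda>n. 1 / (real (Suc n))^(2*k))"
    by (rule summable_comparison_test'[OF sums_summable[OF sq], of 0]) (use le in auto)
  show "0 \<le> zeta_nat (2*k)" unfolding zeta_nat_def by (rule suminf_nonneg[OF sm]) simp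
  have "zeta_nat (2*k) \<le> pi^2/6"
    unfolding zeta_nat_def sums_unique[OF sq] by (rule suminf_le[OF le sm sums_summable[OF sq]])
  also have "pi^2 \<le> 4^2" using pi_less_4 pi_gt_zero by (intro power_mono) auto
  then have "pi^2/6 \<le> 3" by simp
  finally show "zeta_nat (2*k) \<le> 3" .
qed

lemma bcoef_bounds:
  assumes "k \<ge> 1"
  shows "0 \<le> bcoef k" "bcoef k \<le> 6 * (1/9)^k"
proof -
  have "pi powr (- 2 * real k) = inverse (pi powr (real (2*k)))" by (simp add: powr_minus[symmetric])
  also have "\<dots> = inverse (pi^(2*k))" by (simp only: powr_realpow[OF pi_gt_zero])
  also have "\<dots> = (1/pi^2)^k" by (simp add: power_mult power_one_over inverse_eq_divide)
  finally have p: "bcoef k = 2 * (1/pi^2)^k * zeta_nat (2*k)" unfolding bcoef_def by simp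
  have "(3::real)^2 \<le> pi^2" using pi_gt3 by (intro power_mono) auto
  then have "(1/pi^2)^k \<le> (1/9::real)^k" by (intro power_mono) (auto simp: divide_simps)
  then show "0 \<le> bcoef k" "bcoef k \<le> 6 * (1/9)^k"
    unfolding p using zeta_nat_even_bounds[OF assms] by (auto intro!: mult_mono)
qed

lemma square_le_four_power: "real n ^ 2 \<le> 4 ^ n"
proof -
  have "real n \<le> 2^n" using less_exp[of n] by (metis of_nat_less_numeral_power_cancel_iff less_imp_le)
  then have "real n ^ 2 \<le> (2^n)^2" by (intro power_mono) auto
  also have "\<dots> = (2^2)^n" by (simp only: power_mult[symmetric] mult.commute)
  finally show ?thesis by simp
qed

definition bcoef_majorant :: "nat \<Rightarrow> real" where
  "bcoef_majorant k = 6 * (4/9)^Suc k"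

lemma summable_bcoef_majorant: "summable (\<lambda>k. c * bcoef_majorant k)"
  unfolding bcoef_majorant_def by (intro summable_mult summable_geometric) simp

lemma bcoef_majorant_nonneg: "0 \<le> bcoef_majorant k"
  by (simp add: bcoef_majorant_def)

lemma abs_bcoef_mult_le:
  assumes "\<bar>x\<bar> \<le> real (Suc k)^2 * c"
  shows "\<bar>bcoef (Suc k) * x\<bar> \<le> c * bcoef_majorant k"
proof -
  have b: "0 \<le> bcoef (Suc k)" "bcoef (Suc k) \<le> 6 * (1/9)^Suc k" using bcoef_bounds[of "Suc k"] by auto
  have "0 \<le> real (Suc k)^2 * c" using assms abs_ge_zero order_trans by blast
  then have c: "0 \<le> c" by (simp add: zero_le_mult_iff)
  have "\<bar>bcoef (Suc k) * x\<bar> = bcoef (Suc k) * \<bar>x\<bar>" using b by (simp add: abs_mult)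
  also have "\<dots> \<le> 6 * (1/9)^Suc k * (real (Suc k)^2 * c)"
    using b assms by (intro mult_mono) auto
  also have "\<dots> \<le> 6 * (1/9)^Suc k * (4^Suc k * c)"
    using square_le_four_power[of "Suc k"] c by (intro mult_left_mono mult_right_mono) auto
  also have "\<dots> = c * bcoef_majorant k"
    by (simp add: bcoef_majorant_def power_mult_distrib[symmetric])
  finally show ?thesis .
qed

section \<open>Differentiating the series twice\<close>

lemma has_real_derivative_suminf_at_0:
  fixes f f' :: "nat \<Rightarrow> real \<Rightarrow> real"
  assumes "\<delta> > 0"
    and "\<And>n x. \<bar>x\<bar> < \<delta> \<Longrightarrow> (f n has_real_derivative f' n x) (at x)"
    and "\<And>n x. \<bar>x\<bar> < \<delta> \<Longrightarrow> \<bar>f' n x\<bar> \<le> g n"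
    and "summable g" and "summable (\<lambda>n. f n 0)"
  shows "((\<lambda>x. \<Sum>n. f n x) has_real_derivative (\<Sum>n. f' n 0)) (at 0)"
proof (rule has_field_derivative_series'(2)[of "ball 0 \<delta>" f f' 0])
  show "(f n has_real_derivative f' n x) (at x within ball 0 \<delta>)" if "x \<in> ball 0 \<delta>" for n x
    using assms(2)[of x n] that by (auto intro: has_field_derivative_at_within)
  show "uniformly_convergent_on (ball 0 \<delta>) (\<lambda>n x. \<Sum>i<n. f' i x)"
    unfolding uniformly_convergent_on_def
    by (rule exI, rule Weierstrass_m_test[OF _ assms(4)]) (use assms(3) in auto)
qed (use assms(1,5) in auto)

lemma has_real_derivative_norm_square:
  fixes v :: "real \<Rightarrow> 'a::real_inner"
  assumes "(v has_vector_derivative v') (at t)"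
  shows "((\<lambda>t. (norm (v t))^2) has_real_derivative 2 * inner v' (v t)) (at t)"
proof -
  have "((\<lambda>t. inner (v t) (v t)) has_vector_derivative (inner (v t) v' + inner v' (v t))) (at t)"
    using bounded_bilinear.has_vector_derivative[OF bounded_bilinear_inner assms assms] .
  then show ?thesis
    by (simp add: has_real_derivative_iff_has_vector_derivative power2_norm_eq_inner inner_commute)
qed

lemma has_real_derivative_inner:
  fixes v w :: "real \<Rightarrow> 'a::real_inner"
  assumes "(v has_vector_derivative v') (at t)" "(w has_vector_derivative w') (at t)"
  shows "((\<lambda>t. inner (w t) (v t)) has_real_derivative inner w' (v t) + inner (w t) v') (at t)"
proof -
  have "((\<lambda>t. inner (w t) (v t)) has_vector_derivative (inner (w t) v' + inner w' (v t))) (at t)"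
    using bounded_bilinear.has_vector_derivative[OF bounded_bilinear_inner assms(2) assms(1)] .
  then show ?thesis
    by (simp add: has_real_derivative_iff_has_vector_derivative add.commute)
qed

lemma abs_inner_funpow_deriv_le:
  fixes N D :: "'a::real_inner \<Rightarrow> 'a"
  assumes N: "\<And>x. norm (N x) \<le> 1 * norm x" and D: "\<And>x. norm (D x) \<le> 1 * norm x"
  shows "\<bar>inner (funpow_deriv N D e k) ((N^^k) e)\<bar> \<le> real k^2 * (norm e)^2"
proof -
  have "\<bar>inner (funpow_deriv N D e k) ((N^^k) e)\<bar> \<le> norm (funpow_deriv N D e k) * norm ((N^^k) e)"
    by (rule Cauchy_Schwarz_ineq2)
  also have "\<dots> \<le> (real k * norm e) * norm e"
    using norm_funpow_deriv_le[OF N D, of e k] norm_funpow_le[OF N, of k e] by (intro mult_mono) auto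
  also have "\<dots> = real k * (norm e)^2" by (simp add: power2_eq_square)
  also have "\<dots> \<le> real k^2 * (norm e)^2"
    by (rule mult_right_mono) (cases k, simp_all add: power2_eq_square)
  finally show ?thesis .
qed

context
  fixes N A B :: "'a::real_inner \<Rightarrow> 'a" and e :: 'a
  assumes blN: "bounded_linear N" and blA: "bounded_linear A" and blB: "bounded_linear B"
    and nN: "\<And>x. norm (N x) \<le> 1/4 * norm x"
    and nA: "\<And>x. norm (A x) \<le> 1 * norm x" and nB: "\<And>x. norm (B x) \<le> 1 * norm x"
begin

lemma bounded_linear_line: "bounded_linear (\<lambda>x. N x + s *\<^sub>R A x)"
  by (intro bounded_linear_add blN bounded_linear_compose[OF bounded_linear_scaleR_right blA])

lemma norm_plane_le:
  assumes "\<bar>s\<bar> \<le> 1/4" "\<bar>t\<bar> \<le> 1/4"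
  shows "norm (N x + s *\<^sub>R A x + t *\<^sub>R B x) \<le> 1 * norm x"
proof -
  have "norm (N x + s *\<^sub>R A x + t *\<^sub>R B x) \<le> norm (N x) + \<bar>s\<bar> * norm (A x) + \<bar>t\<bar> * norm (B x)"
    by (metis norm_scaleR norm_triangle_le norm_triangle_ineq add_mono order_refl)
  also have "\<dots> \<le> 1/4 * norm x + 1/4 * norm x + 1/4 * norm x"
    using assms nN[of x] nA[of x] nB[of x] by (intro add_mono mult_mono) auto
  finally show ?thesis using norm_ge_zero[of x] by linarith
qed

lemma has_real_derivative_norm_series:
  assumes s: "\<bar>s\<bar> < 1/4"
  shows "((\<lambda>t. \<Sum>k. bcoef (Suc k) * (norm (((\<lambda>x. N x + s *\<^sub>R A x + t *\<^sub>R B x)^^Suc k) e))^2)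
     has_real_derivative
     (\<Sum>k. bcoef (Suc k) * (2 * inner (funpow_deriv (\<lambda>x. N x + s *\<^sub>R A x) B e (Suc k))
         (((\<lambda>x. N x + s *\<^sub>R A x)^^Suc k) e)))) (at 0)"
proof -
  let ?L = "\<lambda>t x. N x + s *\<^sub>R A x + t *\<^sub>R B x"
  have "((\<lambda>t. \<Sum>k. bcoef (Suc k) * (norm ((?L t^^Suc k) e))^2) has_real_derivative
     (\<Sum>k. bcoef (Suc k) * (2 * inner (funpow_deriv (?L 0) B e (Suc k)) ((?L 0^^Suc k) e)))) (at 0)"
  proof (rule has_real_derivative_suminf_at_0[where \<delta>="1/4" and g="\<lambda>k. 2 * (norm e)^2 * bcoef_majorant k"])
    fix k and t :: real
    show "((\<lambda>t. bcoef (Suc k) * (norm ((?L t^^Suc k) e))^2) has_real_derivative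
        bcoef (Suc k) * (2 * inner (funpow_deriv (?L t) B e (Suc k)) ((?L t^^Suc k) e))) (at t)"
      by (intro DERIV_cmult has_real_derivative_norm_square
          has_vector_derivative_funpow_line[OF bounded_linear_line blB])
    assume "\<bar>t\<bar> < 1/4"
    then have "\<And>x. norm (?L t x) \<le> 1 * norm x" using norm_plane_le s by simp
    from abs_inner_funpow_deriv_le[OF this nB, of e "Suc k"]
    have "\<bar>2 * inner (funpow_deriv (?L t) B e (Suc k)) ((?L t^^Suc k) e)\<bar>
        \<le> real (Suc k)^2 * (2 * (norm e)^2)"
      by (simp add: abs_mult)
    then show "\<bar>bcoef (Suc k) * (2 * inner (funpow_deriv (?L t) B e (Suc k)) ((?L t^^Suc k) e))\<bar>
        \<le> 2 * (norm e)^2 * bcoef_majorant k"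
      by (rule abs_bcoef_mult_le)
  next
    have L0: "\<And>x. norm (?L 0 x) \<le> 1 * norm x" using norm_plane_le[of s 0] s by simp
    have "\<bar>(norm ((?L 0^^Suc k) e))^2\<bar> \<le> real (Suc k)^2 * (norm e)^2" for k
    proof -
      have "(norm ((?L 0^^Suc k) e))^2 \<le> (norm e)^2"
        using norm_funpow_le[OF L0, of "Suc k" e] by (intro power_mono) auto
      also have "\<dots> \<le> real (Suc k)^2 * (norm e)^2"
        using mult_right_mono[of 1 "real (Suc k)^2" "(norm e)^2"] by simp
      finally show ?thesis by simp
    qed
    then show "summable (\<lambda>k. bcoef (Suc k) * (norm ((?L 0^^Suc k) e))^2)"
      by (intro summable_comparison_test'[OF summable_bcoef_majorant[of "(norm e)^2"], of 0])
         (simp add: abs_bcoef_mult_le)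
  qed (rule summable_bcoef_majorant | simp)+
  then show ?thesis by simp
qed

lemma has_real_derivative_series_deriv:
  "((\<lambda>s. \<Sum>k. bcoef (Suc k) * (2 * inner (funpow_deriv (\<lambda>x. N x + s *\<^sub>R A x) B e (Suc k))
         (((\<lambda>x. N x + s *\<^sub>R A x)^^Suc k) e)))
   has_real_derivative (\<Sum>k. bcoef (Suc k) * (2 * hess_coeff N A B e (Suc k)))) (at 0)"
proof -
  let ?L = "\<lambda>s x. N x + s *\<^sub>R A x"
  have "((\<lambda>s. \<Sum>k. bcoef (Suc k) * (2 * inner (funpow_deriv (?L s) B e (Suc k)) ((?L s^^Suc k) e)))
     has_real_derivative (\<Sum>k. bcoef (Suc k) * (2 * hess_coeff (?L 0) A B e (Suc k)))) (at 0)"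
  proof (rule has_real_derivative_suminf_at_0[where \<delta>="1/4" and g="\<lambda>k. 2 * (2 * (norm e)^2) * bcoef_majorant k"])
    fix k and s :: real
    show "((\<lambda>s. bcoef (Suc k) * (2 * inner (funpow_deriv (?L s) B e (Suc k)) ((?L s^^Suc k) e)))
        has_real_derivative bcoef (Suc k) * (2 * hess_coeff (?L s) A B e (Suc k))) (at s)"
      unfolding hess_coeff_def
      by (intro DERIV_cmult has_real_derivative_inner has_vector_derivative_funpow_line[OF blN blA]
          has_vector_derivative_funpow_deriv_line[OF blN blA blB])
    assume "\<bar>s\<bar> < 1/4"
    then have "\<And>x. norm (?L s x) \<le> 1 * norm x" using norm_plane_le[of s 0] by simp
    from abs_hess_coeff_le[OF this nA nB, of e "Suc k"]
    have "\<bar>2 * hess_coeff (?L s) A B e (Suc k)\<bar> \<le> real (Suc k)^2 * (2 * (2 * (norm e)^2))"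
      by (simp add: abs_mult mult_ac)
    then show "\<bar>bcoef (Suc k) * (2 * hess_coeff (?L s) A B e (Suc k))\<bar>
        \<le> 2 * (2 * (norm e)^2) * bcoef_majorant k"
      by (rule abs_bcoef_mult_le)
  next
    have L0: "\<And>x. norm (?L 0 x) \<le> 1 * norm x" using norm_plane_le[of 0 0] by simp
    have "\<bar>2 * inner (funpow_deriv (?L 0) B e (Suc k)) ((?L 0^^Suc k) e)\<bar>
        \<le> real (Suc k)^2 * (2 * (norm e)^2)" for k
      using abs_inner_funpow_deriv_le[OF L0 nB, of e "Suc k"] by (simp add: abs_mult)
    then show "summable (\<lambda>k. bcoef (Suc k) * (2 * inner (funpow_deriv (?L 0) B e (Suc k)) ((?L 0^^Suc k) e)))"
      by (intro summable_comparison_test'[OF summable_bcoef_majorant[of "2 * (norm e)^2"], of 0])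
         (simp add: abs_bcoef_mult_le)
  qed (rule summable_bcoef_majorant | simp)+
  then show ?thesis by simp
qed

lemma summable_hess_coeff_series: "summable (\<lambda>k. bcoef (Suc k) * hess_coeff N A B e (Suc k))"
proof (rule summable_comparison_test'[OF summable_bcoef_majorant[of "2 * (norm e)^2"], of 0])
  fix k
  have "\<And>x. norm (N x) \<le> 1 * norm x" using norm_plane_le[of 0 0] by simp
  from abs_hess_coeff_le[OF this nA nB, of e "Suc k"]
  show "norm (bcoef (Suc k) * hess_coeff N A B e (Suc k)) \<le> 2 * (norm e)^2 * bcoef_majorant k"
    using abs_bcoef_mult_le by simp
qed

lemma deriv_deriv_norm_series:
  "deriv (\<lambda>s. deriv (\<lambda>t. \<Sum>k. bcoef (Suc k) * (norm (((\<lambda>x. N x + s *\<^sub>R A x + t *\<^sub>R B x)^^Suc k) e))^2) 0) 0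
   = 2 * (\<Sum>k. bcoef (Suc k) * hess_coeff N A B e (Suc k))"
proof -
  have "deriv (\<lambda>s. deriv (\<lambda>t. \<Sum>k. bcoef (Suc k) * (norm (((\<lambda>x. N x + s *\<^sub>R A x + t *\<^sub>R B x)^^Suc k) e))^2) 0) 0
      = (\<Sum>k. bcoef (Suc k) * (2 * hess_coeff N A B e (Suc k)))"
  proof (rule DERIV_imp_deriv, rule has_field_derivative_transform_within_open[OF has_real_derivative_series_deriv])
    fix s :: real assume "s \<in> ball 0 (1/4)"
    then show "(\<Sum>k. bcoef (Suc k) * (2 * inner (funpow_deriv (\<lambda>x. N x + s *\<^sub>R A x) B e (Suc k))
           (((\<lambda>x. N x + s *\<^sub>R A x)^^Suc k) e)))
        = deriv (\<lambda>t. \<Sum>k. bcoef (Suc k) * (norm (((\<lambda>x. N x + s *\<^sub>R A x + t *\<^sub>R B x)^^Suc k) e))^2) 0"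
      by (intro DERIV_imp_deriv[symmetric] has_real_derivative_norm_series) simp
  qed auto
  also have "\<dots> = 2 * (\<Sum>k. bcoef (Suc k) * hess_coeff N A B e (Suc k))"
    using suminf_mult[OF summable_hess_coeff_series, of 2] by (simp add: mult_ac)
  finally show ?thesis .
qed

end

section \<open>Expansion of the Hessian\<close>

lemma abs_scaled_hess_term_le:
  fixes S A B :: "'a::real_inner \<Rightarrow> 'a"
  assumes S: "\<And>x. norm (S x) \<le> \<sigma> * norm x" and A: "\<And>x. norm (A x) \<le> \<sigma> * norm x"
    and B: "\<And>x. norm (B x) \<le> \<sigma> * norm x" and \<sigma>: "\<sigma> \<ge> 0" and \<epsilon>: "\<bar>\<epsilon>\<bar> * \<sigma> \<le> 1"
    and p: "p \<le> 2*k"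
  shows "\<bar>bcoef (Suc k) * (\<epsilon>^(2*k) * hess_coeff S A B e (Suc k))\<bar>
     \<le> \<bar>\<epsilon>\<bar>^p * (2 * (norm e)^2 * \<sigma>^(p+2)) * bcoef_majorant k"
proof (rule abs_bcoef_mult_le)
  have "\<bar>\<epsilon>^(2*k) * hess_coeff S A B e (Suc k)\<bar>
      \<le> \<bar>\<epsilon>\<bar>^(2*k) * (real (Suc k)^2 * (2 * \<sigma>^(2 * Suc k) * (norm e)^2))"
    unfolding abs_mult power_abs
    by (rule mult_left_mono[OF abs_hess_coeff_le[OF S A B \<sigma>]]) simp
  also have "\<dots> = real (Suc k)^2 * ((\<bar>\<epsilon>\<bar> * \<sigma>)^(2*k) * (2 * \<sigma>^2 * (norm e)^2))"
    by (simp add: power_mult_distrib power_add power2_eq_square mult_ac)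
  also have "\<dots> \<le> real (Suc k)^2 * ((\<bar>\<epsilon>\<bar> * \<sigma>)^p * (2 * \<sigma>^2 * (norm e)^2))"
    using \<sigma> \<epsilon> by (intro mult_left_mono mult_right_mono power_decreasing[OF p]) auto
  also have "\<dots> = real (Suc k)^2 * (\<bar>\<epsilon>\<bar>^p * (2 * (norm e)^2 * \<sigma>^(p+2)))"
    by (simp add: power_mult_distrib power_add power2_eq_square mult_ac)
  finally show "\<bar>\<epsilon>^(2*k) * hess_coeff S A B e (Suc k)\<bar>
      \<le> real (Suc k)^2 * (\<bar>\<epsilon>\<bar>^p * (2 * (norm e)^2 * \<sigma>^(p+2)))" .
qed

lemma abs_suminf_minus_term_le:
  fixes f g :: "nat \<Rightarrow> real"
  assumes g: "summable g" and f: "\<And>k. k \<noteq> h \<Longrightarrow> \<bar>f k\<bar> \<le> g k" and gh: "0 \<le> g h"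
  shows "\<bar>suminf f - f h\<bar> \<le> suminf g"
proof -
  define u where "u k = (if k = h then 0 else f k)" for k
  have u: "\<bar>u k\<bar> \<le> g k" for k using f gh by (simp add: u_def)
  have su: "summable u" by (rule summable_comparison_test'[OF g, of 0]) (simp add: u)
  have "(\<lambda>k. u k + (if k = h then f h else 0)) sums (suminf u + f h)"
    by (intro sums_add summable_sums[OF su] sums_single)
  moreover have "(\<lambda>k. u k + (if k = h then f h else 0)) = f" by (auto simp: u_def)
  ultimately have "suminf f - f h = suminf u" by (simp add: sums_iff)
  also have "\<bar>suminf u\<bar> \<le> (\<Sum>k. \<bar>u k\<bar>)"
    by (rule summable_rabs, rule summable_comparison_test'[OF g, of 0]) (simp add: u)
  also have "\<dots> \<le> suminf g"
    by (rule suminf_le[OF u _ g]) (rule summable_comparison_test'[OF g, of 0], simp add: u)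
  finally show ?thesis .
qed

lemma norm_blinfun_apply_le: "norm T \<le> c \<Longrightarrow> norm (blinfun_apply T x) \<le> c * norm x"
  using norm_blinfun[of T x] mult_right_mono[of "norm T" c "norm x"] by simp

lemma Hform_eq_suminf:
  fixes S A B :: "'a::euclidean_space \<Rightarrow>\<^sub>L 'a"
  assumes S: "\<bar>\<epsilon>\<bar> * norm S \<le> 1/4" and A: "norm A \<le> 1" and B: "norm B \<le> 1"
  shows "Hform e S \<epsilon> A B =
    (\<Sum>k. bcoef (Suc k) * (\<epsilon>^(2*k) * hess_coeff (blinfun_apply S) (blinfun_apply A) (blinfun_apply B) e (Suc k)))"
proof -
  have nS: "norm (\<epsilon> *\<^sub>R blinfun_apply S x) \<le> 1/4 * norm x" for x
  proof -
    have "norm (\<epsilon> *\<^sub>R blinfun_apply S x) \<le> \<bar>\<epsilon>\<bar> * (norm S * norm x)"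
      by (simp add: mult_left_mono norm_blinfun)
    also have "\<dots> \<le> 1/4 * norm x"
      using mult_right_mono[OF S norm_ge_zero[of x]] by (simp add: mult.assoc)
    finally show ?thesis .
  qed
  have blS: "bounded_linear (\<lambda>x. \<epsilon> *\<^sub>R blinfun_apply S x)"
    by (intro bounded_linear_compose[OF bounded_linear_scaleR_right] blinfun.bounded_linear_right)
  have app: "blinfun_apply (\<epsilon> *\<^sub>R S + s *\<^sub>R A + t *\<^sub>R B)
      = (\<lambda>x. \<epsilon> *\<^sub>R blinfun_apply S x + s *\<^sub>R blinfun_apply A x + t *\<^sub>R blinfun_apply B x)" for s t
    by (simp add: fun_eq_iff plus_blinfun.rep_eq scaleR_blinfun.rep_eq)
  have "Hform e S \<epsilon> A B =
      (\<Sum>k. bcoef (Suc k) * hess_coeff (\<lambda>x. \<epsilon> *\<^sub>R blinfun_apply S x) (blinfun_apply A) (blinfun_apply B) e (Suc k))"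
    unfolding Hform_def Phi00_def app
    by (simp only: deriv_deriv_norm_series[OF blS blinfun.bounded_linear_right blinfun.bounded_linear_right nS norm_blinfun_apply_le[OF A] norm_blinfun_apply_le[OF B]])
  then show ?thesis
    by (simp add: hess_coeff_scaleR blinfun.bounded_linear_right bounded_linear.linear)
qed

lemma Hform_expansion_bound:
  fixes S A B :: "'a::euclidean_space \<Rightarrow>\<^sub>L 'a"
  assumes skS: "\<And>x y. inner (blinfun_apply S x) y = - inner x (blinfun_apply S y)"
    and skA: "\<And>x y. inner (blinfun_apply A x) y = - inner x (blinfun_apply A y)"
    and skB: "\<And>x y. inner (blinfun_apply B x) y = - inner x (blinfun_apply B y)"
    and vanA: "\<And>l. l < i \<Longrightarrow> blinfun_apply A ((blinfun_apply S ^^ l) e) = 0"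
    and vanB: "\<And>l. l < j \<Longrightarrow> blinfun_apply B ((blinfun_apply S ^^ l) e) = 0"
    and nA: "norm A \<le> 1" and nB: "norm B \<le> 1"
    and \<sigma>: "1 \<le> \<sigma>" "norm S \<le> \<sigma>" and \<epsilon>: "\<bar>\<epsilon>\<bar> * \<sigma> \<le> 1/4"
    and n_def: "n = (if odd (i + j) then i + j + 1 else i + j + 2)"
  shows "\<bar>Hform e S \<epsilon> A B - (if odd (i + j) then 0 else
      (-1) powi ((int i - int j) div 2) * bcoef (1 + (i + j) div 2) * \<epsilon> ^ (i + j)
        * inner (blinfun_apply A ((blinfun_apply S ^^ i) e)) (blinfun_apply B ((blinfun_apply S ^^ j) e)))\<bar>
    \<le> \<bar>\<epsilon>\<bar>^n * (2 * (norm e)^2 * \<sigma>^(n+2)) * (\<Sum>k. bcoef_majorant k)"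
proof -
  let ?S = "blinfun_apply S" and ?A = "blinfun_apply A" and ?B = "blinfun_apply B"
  have lin: "linear ?S" using blinfun.bounded_linear_right bounded_linear.linear by blast
  have \<sigma>A: "norm A \<le> \<sigma>" and \<sigma>B: "norm B \<le> \<sigma>" using nA nB \<sigma> by linarith+
  define C where "C = \<bar>\<epsilon>\<bar>^n * (2 * (norm e)^2 * \<sigma>^(n+2))"
  define f where "f k = bcoef (Suc k) * (\<epsilon>^(2*k) * hess_coeff ?S ?A ?B e (Suc k))" for k
  define h where "h = (i + j) div 2"
  have "\<bar>\<epsilon>\<bar> * norm S \<le> 1/4" using \<epsilon> \<sigma> by (meson abs_ge_zero mult_left_mono order_trans)
  then have H: "Hform e S \<epsilon> A B = suminf f" unfolding f_def by (rule Hform_eq_suminf[OF _ nA nB])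
  have "hess_coeff ?S ?A ?B e (Suc h) =
      (if odd (i + j) then 0 else (-1) powi ((int i - int j) div 2) * mixed_term ?S ?A ?B e i 0 j)"
    unfolding h_def
    by (rule hess_coeff_middle[where i = i and j = j, OF lin skS skA skB]) (use vanA vanB in auto)
  moreover have "even (i + j) \<Longrightarrow> 2 * h = i + j" unfolding h_def by simp
  ultimately have fh: "f h = (if odd (i + j) then 0 else
      (-1) powi ((int i - int j) div 2) * bcoef (1 + (i + j) div 2) * \<epsilon> ^ (i + j)
        * inner (?A ((?S ^^ i) e)) (?B ((?S ^^ j) e)))"
    by (auto simp: f_def mixed_term_def h_def mult_ac)
  have tail: "\<bar>f k\<bar> \<le> C * bcoef_majorant k" if "k \<noteq> h" for k
  proof (cases "2 * k < i + j")
    case True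
    have "hess_coeff ?S ?A ?B e (Suc k) = 0"
      by (rule hess_coeff_eq_0[where i = i and j = j, OF lin skS skA skB]) (use vanA vanB True in auto)
    then show ?thesis using \<sigma> by (simp add: f_def C_def bcoef_majorant_nonneg)
  next
    case False
    with that have "n \<le> 2 * k" unfolding n_def h_def by presburger
    then show ?thesis
      unfolding f_def C_def
      by (intro abs_scaled_hess_term_le[OF norm_blinfun_apply_le[OF \<sigma>(2)] norm_blinfun_apply_le[OF \<sigma>A] norm_blinfun_apply_le[OF \<sigma>B]])
         (use \<sigma> \<epsilon> in auto)
  qed
  have "\<bar>suminf f - f h\<bar> \<le> (\<Sum>k. C * bcoef_majorant k)"
    by (rule abs_suminf_minus_term_le[OF summable_bcoef_majorant tail])
       (use \<sigma> in \<open>auto simp: C_def bcoef_majorant_nonneg\<close>)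
  also have "\<dots> = C * (\<Sum>k. bcoef_majorant k)"
    using suminf_mult[OF summable_bcoef_majorant[of 1]] by simp
  finally show ?thesis unfolding H fh C_def .
qed

lemma Vset_skew:
  assumes "\<forall>x y. br x y = - br y x" and "T \<in> Vset br"
  shows "inner (blinfun_apply T x) y = - inner x (blinfun_apply T y)"
proof -
  obtain \<mu> :: "'b \<Rightarrow> real" where \<mu>: "linear \<mu>" "\<forall>x x'. inner (blinfun_apply T x) x' = \<mu> (br x x')"
    using assms(2) unfolding Vset_def by blast
  have "inner (blinfun_apply T x) y = \<mu> (- br y x)" using \<mu>(2) assms(1) by metis
  also have "\<dots> = - inner (blinfun_apply T y) x" using \<mu> by (simp add: linear_neg)
  finally show ?thesis by (simp add: inner_commute)
qed

lemma Hform_bound_on_Vj: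
  fixes br :: "'a::euclidean_space \<Rightarrow> 'a \<Rightarrow> 'b::euclidean_space"
  assumes skew: "\<forall>x y. br x y = - br y x" and S: "S \<in> Vset br"
    and A: "A \<in> Vj br S e i" and B: "B \<in> Vj br S e j" and nA: "norm A \<le> 1" and nB: "norm B \<le> 1"
    and \<epsilon>: "\<bar>\<epsilon>\<bar> < 1 / (4 * max 1 (norm S))"
  shows "if odd (i + j) then
      \<bar>Hform e S \<epsilon> A B\<bar> \<le> 2 * (norm e)^2 * max 1 (norm S)^(i+j+4) * (\<Sum>k. bcoef_majorant k) * \<bar>\<epsilon>\<bar>^(i+j+1)
    else
      \<bar>Hform e S \<epsilon> A B
        - (-1) powi ((int i - int j) div 2) * bcoef (1 + (i + j) div 2) * \<epsilon> ^ (i + j)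
          * inner (blinfun_apply A ((blinfun_apply S ^^ i) e)) (blinfun_apply B ((blinfun_apply S ^^ j) e))\<bar>
      \<le> 2 * (norm e)^2 * max 1 (norm S)^(i+j+4) * (\<Sum>k. bcoef_majorant k) * \<bar>\<epsilon>\<bar>^(i+j+2)"
proof -
  define \<sigma> where "\<sigma> = max 1 (norm S)"
  define n where "n = (if odd (i + j) then i + j + 1 else i + j + 2)"
  have \<sigma>: "1 \<le> \<sigma>" "norm S \<le> \<sigma>" unfolding \<sigma>_def by auto
  have "\<bar>\<epsilon>\<bar> * \<sigma> \<le> 1/4" using \<epsilon> \<sigma> unfolding \<sigma>_def by (simp add: field_simps)
  from Hform_expansion_bound[OF Vset_skew[OF skew S] Vset_skew[OF skew] Vset_skew[OF skew] _ _ nA nB \<sigma> this n_def]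
  have "\<bar>Hform e S \<epsilon> A B - (if odd (i + j) then 0 else
      (-1) powi ((int i - int j) div 2) * bcoef (1 + (i + j) div 2) * \<epsilon> ^ (i + j)
        * inner (blinfun_apply A ((blinfun_apply S ^^ i) e)) (blinfun_apply B ((blinfun_apply S ^^ j) e)))\<bar>
    \<le> \<bar>\<epsilon>\<bar>^n * (2 * (norm e)^2 * \<sigma>^(n+2)) * (\<Sum>k. bcoef_majorant k)"
    using A B unfolding Vj_def by blast
  also have "\<dots> \<le> 2 * (norm e)^2 * \<sigma>^(i+j+4) * (\<Sum>k. bcoef_majorant k) * \<bar>\<epsilon>\<bar>^n"
  proof -
    have "\<sigma>^(n+2) \<le> \<sigma>^(i+j+4)" using \<sigma> by (intro power_increasing) (auto simp: n_def)
    moreover have "0 \<le> (\<Sum>k. bcoef_majorant k)"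
      using summable_bcoef_majorant[of 1] by (simp add: suminf_nonneg bcoef_majorant_nonneg)
    ultimately have "2 * (norm e)^2 * (\<Sum>k. bcoef_majorant k) * \<bar>\<epsilon>\<bar>^n * \<sigma>^(n+2)
        \<le> 2 * (norm e)^2 * (\<Sum>k. bcoef_majorant k) * \<bar>\<epsilon>\<bar>^n * \<sigma>^(i+j+4)"
      by (intro mult_left_mono) auto
    then show ?thesis by (simp only: mult_ac)
  qed
  finally show ?thesis unfolding \<sigma>_def n_def by (cases "odd (i + j)") simp_all
qed

theorem lemma3p2:
  fixes br :: "'a::euclidean_space \<Rightarrow> 'a \<Rightarrow> 'b::euclidean_space"
    and S :: "'a \<Rightarrow>\<^sub>L 'a" and e :: 'a and r :: nat and W :: "nat \<Rightarrow> ('a \<Rightarrow>\<^sub>L 'a) set"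
  assumes br_bilinear: "bilinear br"
    and br_skew: "\<forall>x y. br x y = - br y x"
    and br_gen: "span (range (\<lambda>(x, y). br x y)) = UNIV"
    and g2_nonzero: "\<exists>z::'b. z \<noteq> 0"
    and S_gen: "S \<in> Vgen br"
    and e_proj: "\<forall>c::real. (\<exists>x. x \<noteq> 0 \<and> blinfun_apply S (blinfun_apply S x) = c *\<^sub>R x) \<longrightarrow>
        closest_point {x. blinfun_apply S (blinfun_apply S x) = c *\<^sub>R x} e \<noteq> 0"
    and r_def: "r = (LEAST r. Vj br S e r = {0})"
    and W_compl: "\<forall>j<r. subspace (W j) \<and> W j \<subseteq> Vj br S e j \<and>
        W j \<inter> Vj br S e (Suc j) = {0} \<and>
        Vj br S e j = {A + B | A B. A \<in> W j \<and> B \<in> Vj br S e (Suc j)}"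
  shows "\<forall>i<r. \<forall>j<r. \<exists>C \<delta>. \<delta> > 0 \<and>
     (\<forall>\<epsilon>::real. 0 < \<bar>\<epsilon>\<bar> \<and> \<bar>\<epsilon>\<bar> < \<delta> \<longrightarrow>
       (\<forall>A \<in> W i. \<forall>B \<in> W j. norm A \<le> 1 \<longrightarrow> norm B \<le> 1 \<longrightarrow>
         (if odd (i + j) then
            \<bar>Hform e S \<epsilon> A B\<bar> \<le> C * \<bar>\<epsilon>\<bar> ^ (i + j + 1)
          else
            \<bar>Hform e S \<epsilon> A B
              - (-1) powi ((int i - int j) div 2) * bcoef (1 + (i + j) div 2) * \<epsilon> ^ (i + j)
                * inner (blinfun_apply A ((blinfun_apply S ^^ i) e))
                        (blinfun_apply B ((blinfun_apply S ^^ j) e))\<bar>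
              \<le> C * \<bar>\<epsilon>\<bar> ^ (i + j + 2))))"
proof -
  have S: "S \<in> Vset br" using S_gen by (simp add: Vgen_def)
  have W: "W j \<subseteq> Vj br S e j" if "j < r" for j using W_compl that by blast
  have \<delta>: "0 < 1 / (4 * max 1 (norm S))" by simp
  show ?thesis
    by (intro allI impI exI conjI ballI, rule \<delta>, rule Hform_bound_on_Vj[OF br_skew S]) (use W in auto)
qed

end
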